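(* Let $n\geq 3$, $d\geq 2$, $\ell\in\mathbb{R}_{>0}^n$, let $f_d:\mathbb{R}^d\to\mathbb{R}^{d+1}$ be a linear Euclidean isometry with induced map $F_d:V_d(\ell)\to V_{d+1}(\ell)$, and let $P\in V_d(\ell)$. Then the preimage under $F_d$ of the $SO(d+1)$-orbit of $F_d(P)$ is the $O(d)$-orbit of $P$: \[F_d^{-1}\big(SO(d+1)(F_d(P))\big)=O(d)(P).\]
   Context: $V_d(\ell)=\{(\mathbf{v}_1,\ldots,\mathbf{v}_{n-1})\in(\mathbb{R}^d)^{n-1} : \|\mathbf{v}_i-\mathbf{v}_{i-1}\|=l_i,\ i=1,\ldots,n\}$ with $\mathbf{v}_0=\mathbf{v}_n=\mathbf{0}$. A group $G$ of linear maps acts on polygons diagonally, $T(\mathbf{v}_1,\ldots,\mathbf{v}_{n-1})=(T(\mathbf{v}_1),\ldots,T(\mathbf{v}_{n-1}))$, and $G(P)=\{T(P):T\in G\}$ is the orbit. $F_d(\mathbf{v}_1,\ldots,\mathbf{v}_{n-1})=(f_d(\mathbf{v}_1),\ldots,f_d(\mathbf{v}_{n-1}))$. *)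

theory Defs
  imports "HOL-Analysis.Analysis"
begin

text \<open>A closed polygon with side lengths l 1, ..., l n in R^d is represented as a
function v :: nat => real^'d with v 0 = 0, v n = 0 (the vertices v 1 .. v (n-1) are
the data), normalised to 0 at indices beyond n so that polygons are equal iff
their vertex tuples are equal.\<close>
definition polygon_space :: "nat \<Rightarrow> (nat \<Rightarrow> real) \<Rightarrow> (nat \<Rightarrow> real^'d) set" where
  "polygon_space n l = {v. v 0 = 0 \<and> v n = 0 \<and> (\<forall>i>n. v i = 0) \<and>
      (\<forall>i\<in>{1..n}. norm (v i - v (i - 1)) = l i)}"

definition act :: "(real^'a \<Rightarrow> real^'b) \<Rightarrow> (nat \<Rightarrow> real^'a) \<Rightarrow> (nat \<Rightarrow> real^'b)" where
  "act T v = (\<lambda>i. T (v i))"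

definition orbit :: "(real^'a \<Rightarrow> real^'a) set \<Rightarrow> (nat \<Rightarrow> real^'a) \<Rightarrow> (nat \<Rightarrow> real^'a) set" where
  "orbit G P = {act T P | T. T \<in> G}"

definition O_group :: "(real^'a \<Rightarrow> real^'a) set" where
  "O_group = {T. orthogonal_transformation T}"

definition SO_group :: "(real^'a \<Rightarrow> real^'a) set" where
  "SO_group = {T. orthogonal_transformation T \<and> det (matrix T) = 1}"

end

theory Submission
  imports Defs
begin

text \<open>The map \<open>f\<close> preserves inner products, so if \<open>F(Q) = S(F(P))\<close> for an orthogonal \<open>S\<close>,
then \<open>Q\<close> and \<open>P\<close> have the same Gram matrix. Configurations with equal Gram matrices are
congruent: a linear map matching them is isometric on their span, and it extends to an
orthogonal map by gluing it with an isometry between the orthogonal complements.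
Conversely, an orthogonal \<open>T\<close> of \<open>R^d\<close> lifts to an orthogonal map of \<open>R^(d+1)\<close> acting as
\<open>T\<close> on the range of \<open>f\<close>. That range is a proper subspace, so composing with a reflection
fixing it pointwise makes the determinant 1 without moving \<open>F(P)\<close>.\<close>

lemma linear_norm_preserving_inner:
  fixes f :: "'a::real_inner \<Rightarrow> 'b::real_inner"
  assumes "linear f" and "\<And>x. norm (f x) = norm x"
  shows "f v \<bullet> f w = v \<bullet> w"
  unfolding dot_norm[of "f v"] dot_norm[of v]
  by (simp add: assms linear_add[OF assms(1), symmetric])

lemma inner_linear_eq_on_span:
  fixes g :: "'a::real_inner \<Rightarrow> 'b::real_inner"
  assumes g: "linear g" and S: "\<And>b. b \<in> S \<Longrightarrow> g b \<bullet> z = b \<bullet> w" and v: "v \<in> span S"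
  shows "g v \<bullet> z = v \<bullet> w"
proof (rule span_induct[OF v])
  interpret g: linear g by fact
  show "subspace {v. g v \<bullet> z = v \<bullet> w}"
    unfolding subspace_def by (simp add: g.add g.scale g.zero inner_add_left)
qed (rule S)

lemma gram_eq_imp_linear_isometry_on_span:
  fixes x :: "'i \<Rightarrow> 'a::euclidean_space" and y :: "'i \<Rightarrow> 'b::euclidean_space"
  assumes gram: "\<And>i j. x i \<bullet> x j = y i \<bullet> y j"
  obtains g where "linear g" "\<And>i. g (x i) = y i"
    "\<And>v. v \<in> span (range x) \<Longrightarrow> norm (g v) = norm v"
proof -
  obtain B where B: "B \<subseteq> range x" "independent B" "range x \<subseteq> span B"
    using maximal_independent_subset by blast
  have span_B: "span B = span (range x)"
    using B by (metis span_mono span_span subset_antisym)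
  have y_welldefined: "y i = y j" if "x i = x j" for i j
  proof -
    have "(y i - y j) \<bullet> (y i - y j) = (x i - x j) \<bullet> (x i - x j)"
      by (simp add: inner_diff gram inner_commute)
    then show ?thesis
      using that by simp
  qed
  obtain g where g: "linear g" "\<And>b. b \<in> B \<Longrightarrow> g b = y (inv x b)"
    using linear_independent_extend[OF B(2), of "\<lambda>b. y (inv x b)"] by blast
  have g_basis: "g (x i) = y i" if "x i \<in> B" for i
    using g(2)[OF that] y_welldefined[of "inv x (x i)" i] by (simp add: f_inv_into_f)
  have g_inner_y: "g v \<bullet> y j = v \<bullet> x j" if "v \<in> span B" for v j
  proof (rule inner_linear_eq_on_span[OF g(1) _ that])
    show "g b \<bullet> y j = b \<bullet> x j" if "b \<in> B" for b
      using that B(1) g_basis gram by auto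
  qed
  have g_inner: "g w \<bullet> g v = w \<bullet> v" if "v \<in> span B" "w \<in> span B" for v w
  proof (rule inner_linear_eq_on_span[OF g(1) _ that(2)])
    show "g b \<bullet> g v = b \<bullet> v" if "b \<in> B" for b
      using that B(1) g_basis g_inner_y[OF \<open>v \<in> span B\<close>] by (auto simp: inner_commute)
  qed
  show ?thesis
  proof (rule that[OF g(1)])
    show "g (x j) = y j" for j
    proof -
      have x_j: "x j \<in> span B"
        using B(3) by auto
      have "(g (x j) - y j) \<bullet> (g (x j) - y j) = 0"
        using g_inner[OF x_j x_j] g_inner_y[OF x_j, of j] gram[of j j]
        by (simp add: inner_diff inner_commute)
      then show ?thesis
        by simp
    qed
    show "norm (g v) = norm v" if "v \<in> span (range x)" for v
      using g_inner[of v v] that span_B by (simp add: norm_eq)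
  qed
qed

lemma dim_orthogonal_comp:
  fixes U :: "'a::euclidean_space set"
  assumes "subspace U"
  shows "dim (U\<^sup>\<bottom>) + dim U = DIM('a)"
  using dim_subspace_orthogonal_to_vectors[OF assms subspace_UNIV]
  by (simp add: orthogonal_comp_def)

lemma dim_image_isometry_on_subspace:
  fixes g :: "'a::euclidean_space \<Rightarrow> 'b::euclidean_space"
  assumes g: "linear g" and A: "subspace A"
    and iso: "\<And>v. v \<in> A \<Longrightarrow> norm (g v) = norm v"
  shows "dim (g ` A) = dim A"
proof (rule dim_image_eq[OF g], rule inj_onI)
  fix v w
  assume v: "v \<in> span A" and w: "w \<in> span A" and "g v = g w"
  have "v - w \<in> A"
    using span_diff[OF v w] span_eq_iff[THEN iffD2, OF A] by simp
  moreover have "g (v - w) = 0"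
    using \<open>g v = g w\<close> by (simp add: linear_diff[OF g])
  ultimately show "v = w"
    using iso by fastforce
qed

lemma linear_extend_on_orthogonal_comp:
  fixes g h :: "'a::euclidean_space \<Rightarrow> 'b::real_vector"
  assumes g: "linear g" and h: "linear h" and A: "subspace A"
  obtains T where "linear T" "\<And>v. v \<in> A \<Longrightarrow> T v = g v" "\<And>v. v \<in> A\<^sup>\<bottom> \<Longrightarrow> T v = h v"
proof -
  obtain B where B: "B \<subseteq> A" "pairwise orthogonal B" "\<And>b. b \<in> B \<Longrightarrow> norm b = 1" "span B = A"
    using orthonormal_basis_subspace[OF A] by metis
  obtain C where C: "C \<subseteq> A\<^sup>\<bottom>" "pairwise orthogonal C" "\<And>c. c \<in> C \<Longrightarrow> norm c = 1"
    "span C = A\<^sup>\<bottom>"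
    using orthonormal_basis_subspace[OF subspace_orthogonal_comp] by metis
  have BC: "orthogonal b c" if "b \<in> B" "c \<in> C" for b c
    using that B(1) C(1) by (auto simp: orthogonal_comp_def)
  then have "pairwise orthogonal (B \<union> C)"
    using B(2) C(2) orthogonal_commute unfolding pairwise_def by (metis Un_iff)
  moreover have "0 \<notin> B \<union> C"
    using B(3) C(3) by force
  ultimately have "independent (B \<union> C)"
    by (rule pairwise_orthogonal_independent)
  then obtain T where T: "linear T" "\<And>b. b \<in> B \<union> C \<Longrightarrow> T b = (if b \<in> B then g b else h b)"
    using linear_independent_extend[of "B \<union> C" "\<lambda>b. if b \<in> B then g b else h b"] by blast
  show ?thesis
  proof (rule that[OF T(1)])
    show "T v = g v" if "v \<in> A" for v
    proof (rule linear_eq_on_span[OF T(1) g])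
      show "v \<in> span B"
        using that B(4) by simp
      show "T b = g b" if "b \<in> B" for b
        using that T(2) by simp
    qed
    show "T v = h v" if "v \<in> A\<^sup>\<bottom>" for v
    proof (rule linear_eq_on_span[OF T(1) h])
      show "v \<in> span C"
        using that C(4) by simp
      show "T b = h b" if "b \<in> C" for b
        using that T(2) BC[of b b] C(3)[OF that] by (auto simp: orthogonal_self)
    qed
  qed
qed

lemma orthogonal_transformation_extending_isometry:
  fixes g :: "'a::euclidean_space \<Rightarrow> 'a"
  assumes g: "linear g" and A: "subspace A"
    and iso: "\<And>v. v \<in> A \<Longrightarrow> norm (g v) = norm v"
  obtains T where "orthogonal_transformation T" "\<And>v. v \<in> A \<Longrightarrow> T v = g v"
proof -
  have "dim (A\<^sup>\<bottom>) = dim ((g ` A)\<^sup>\<bottom>)"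
    using dim_orthogonal_comp[OF A] dim_orthogonal_comp[OF linear_subspace_image[OF g A]]
      dim_image_isometry_on_subspace[OF assms] by linarith
  then obtain h where h: "linear h" "h ` (A\<^sup>\<bottom>) = (g ` A)\<^sup>\<bottom>"
    and h_iso: "\<And>v. v \<in> A\<^sup>\<bottom> \<Longrightarrow> norm (h v) = norm v"
    using isometry_subspaces[OF subspace_orthogonal_comp subspace_orthogonal_comp] by blast
  obtain T where T: "linear T" and TA: "\<And>v. v \<in> A \<Longrightarrow> T v = g v"
    and TC: "\<And>v. v \<in> A\<^sup>\<bottom> \<Longrightarrow> T v = h v"
    using linear_extend_on_orthogonal_comp[OF g h(1) A] by blast
  have "norm (T x) = norm x" for x
  proof -
    obtain a c where ac: "a \<in> A" "c \<in> A\<^sup>\<bottom>" "x = a + c"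
      using subspace_sum_orthogonal_comp[OF A] by (metis UNIV_I set_plus_elim)
    have "orthogonal (g a) (h c)"
      using ac h(2) by (auto simp: orthogonal_comp_def)
    moreover have "orthogonal a c"
      using ac by (auto simp: orthogonal_comp_def)
    ultimately have "(norm (T x))\<^sup>2 = (norm x)\<^sup>2"
      using ac TA TC T iso h_iso by (simp add: linear_add norm_add_Pythagorean)
    then show ?thesis
      by simp
  qed
  then have "orthogonal_transformation T"
    using T by (simp add: orthogonal_transformation)
  then show ?thesis
    using that TA by blast
qed

lemma gram_eq_imp_orthogonal_transformation:
  fixes x y :: "'i \<Rightarrow> 'a::euclidean_space"
  assumes "\<And>i j. x i \<bullet> x j = y i \<bullet> y j"
  obtains T where "orthogonal_transformation T" "\<And>i. T (x i) = y i"
proof -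
  obtain g where g: "linear g" "\<And>i. g (x i) = y i"
    and iso: "\<And>v. v \<in> span (range x) \<Longrightarrow> norm (g v) = norm v"
    using gram_eq_imp_linear_isometry_on_span assms by blast
  obtain T where "orthogonal_transformation T" "\<And>v. v \<in> span (range x) \<Longrightarrow> T v = g v"
    using orthogonal_transformation_extending_isometry[OF g(1) subspace_span iso] by blast
  then show ?thesis
    using that g(2) by (simp add: span_base)
qed

lemma coordinate_reflection_orthogonal_det:
  fixes k :: "'n::finite"
  defines "\<rho> \<equiv> \<lambda>x::real^'n. \<chi> i. if i = k then - x $ i else x $ i"
  shows "orthogonal_transformation \<rho>" and "det (matrix \<rho>) = -1"
proof -
  have "linear \<rho>"
    by (rule linearI) (auto simp: \<rho>_def vec_eq_iff)
  moreover have "\<rho> x \<bullet> \<rho> x = x \<bullet> x" for x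
    unfolding \<rho>_def inner_vec_def by (intro sum.cong) auto
  ultimately show "orthogonal_transformation \<rho>"
    by (simp add: orthogonal_transformation norm_eq)
  have "det (matrix \<rho>) = (\<Prod>i\<in>UNIV. matrix \<rho> $ i $ i)"
    by (rule det_diagonal) (simp add: matrix_def \<rho>_def axis_def)
  also have "\<dots> = (\<Prod>i\<in>UNIV. if i = k then -1 else 1)"
    by (intro prod.cong) (auto simp: matrix_def \<rho>_def)
  also have "\<dots> = -1"
    by (simp add: prod.delta)
  finally show "det (matrix \<rho>) = -1" .
qed

lemma det_matrix_conjugate:
  fixes U A :: "real^'n \<Rightarrow> real^'n"
  assumes U: "orthogonal_transformation U" and "linear A"
  shows "det (matrix (inv U \<circ> A \<circ> U)) = det (matrix A)"
proof -
  have lin: "linear U" "linear (inv U)"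
    using U orthogonal_transformation_inv orthogonal_transformation_linear by blast+
  have "det (matrix (inv U)) * det (matrix U) = det (matrix (inv U \<circ> U))"
    by (simp add: matrix_compose lin det_mul)
  also have "inv U \<circ> U = id"
    using U by (simp add: orthogonal_transformation_inj)
  finally have "det (matrix (inv U)) * det (matrix U) = 1"
    by (simp add: matrix_id_mat_1[unfolded id_def])
  then show ?thesis
    using \<open>linear A\<close> lin by (simp add: matrix_compose linear_compose det_mul)
qed

lemma hyperplane_reflection_exists:
  fixes u :: "real^'n"
  assumes "u \<noteq> 0"
  obtains R where "orthogonal_transformation R" "det (matrix R) = -1"
    "\<And>w. orthogonal u w \<Longrightarrow> R w = w"
proof -
  obtain k :: 'n where True by simp
  define \<rho> where "\<rho> = (\<lambda>x::real^'n. \<chi> i. if i = k then - x $ i else x $ i)"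
  have \<rho>: "orthogonal_transformation \<rho>" "det (matrix \<rho>) = -1"
    unfolding \<rho>_def by (rule coordinate_reflection_orthogonal_det)+
  have scaled_axis: "norm (norm u *\<^sub>R axis k (1::real)) = norm u"
    by simp
  obtain U where U: "orthogonal_transformation U" "U u = norm u *\<^sub>R axis k (1::real)"
    using orthogonal_transformation_exists[OF scaled_axis[symmetric]] by blast
  have "(inv U \<circ> \<rho> \<circ> U) w = w" if "orthogonal u w" for w
  proof -
    have "norm u * U w $ k = U w \<bullet> U u"
      by (simp add: U(2) inner_axis)
    also have "\<dots> = 0"
      using U(1) that by (simp add: orthogonal_transformation_def orthogonal_def inner_commute)
    finally have "U w $ k = 0"
      using assms by simp
    then have "\<rho> (U w) = U w"
      by (simp add: \<rho>_def vec_eq_iff)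
    then show ?thesis
      using orthogonal_transformation_inj[OF U(1)] by simp
  qed
  moreover have "orthogonal_transformation (inv U \<circ> \<rho> \<circ> U)"
    using U(1) \<rho>(1) by (simp add: orthogonal_transformation_compose orthogonal_transformation_inv)
  moreover have "det (matrix (inv U \<circ> \<rho> \<circ> U)) = -1"
    using det_matrix_conjugate[OF U(1) orthogonal_transformation_linear[OF \<rho>(1)]] \<rho>(2) by simp
  ultimately show ?thesis
    using that by blast
qed

lemma act_linear_isometry_polygon_space:
  fixes T :: "real^'a \<Rightarrow> real^'b"
  assumes T: "linear T" "\<And>x. norm (T x) = norm x" and P: "P \<in> polygon_space n l"
  shows "act T P \<in> polygon_space n l"
  using P by (auto simp: polygon_space_def act_def T linear_0 linear_diff[OF T(1), symmetric])

lemma isometric_embedding_reflects_congruence: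
  fixes f :: "'a::euclidean_space \<Rightarrow> 'b::real_inner"
  assumes f: "linear f" "\<And>x. norm (f x) = norm x"
    and S: "orthogonal_transformation S" "\<And>i. S (f (P i)) = f (Q i)"
  obtains T where "orthogonal_transformation T" "\<And>i. T (P i) = Q i"
proof -
  have "P i \<bullet> P j = Q i \<bullet> Q j" for i j
  proof -
    have "P i \<bullet> P j = S (f (P i)) \<bullet> S (f (P j))"
      using S(1) linear_norm_preserving_inner[OF f] by (simp add: orthogonal_transformation_def)
    also have "\<dots> = Q i \<bullet> Q j"
      using linear_norm_preserving_inner[OF f] by (simp add: S(2))
    finally show ?thesis .
  qed
  then show ?thesis
    using gram_eq_imp_orthogonal_transformation that by blast
qed

lemma orthogonal_transformation_lifts_to_rotation:
  fixes f :: "real^'d \<Rightarrow> real^'e"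
  assumes f: "linear f" "\<And>x. norm (f x) = norm x" and dim: "CARD('d) < CARD('e)"
    and T: "orthogonal_transformation T"
  obtains S where "orthogonal_transformation S" "det (matrix S) = 1" "\<And>v. S (f v) = f (T v)"
proof -
  have "f v \<bullet> f w = f (T v) \<bullet> f (T w)" for v w
    using T linear_norm_preserving_inner[OF f] by (simp add: orthogonal_transformation_def)
  then obtain S0 where S0: "orthogonal_transformation S0" "\<And>v. S0 (f v) = f (T v)"
    using gram_eq_imp_orthogonal_transformation[of f "\<lambda>v. f (T v)"] by blast
  have "dim (range f) < DIM(real^'e)"
    using dim_image_le[OF f(1), of UNIV] dim by simp
  then obtain u where u: "u \<noteq> 0" "\<And>y. y \<in> span (range f) \<Longrightarrow> orthogonal u y"
    using orthogonal_to_subspace_exists by blast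
  obtain R where R: "orthogonal_transformation R" "det (matrix R) = -1"
    and R_fix: "\<And>w. orthogonal u w \<Longrightarrow> R w = w"
    using hyperplane_reflection_exists[OF u(1)] by blast
  have "\<bar>det (matrix S0)\<bar> = 1"
    using S0(1) by simp
  then consider "det (matrix S0) = 1" | "det (matrix S0) = -1"
    by linarith
  then show ?thesis
  proof cases
    case 1
    then show ?thesis
      using that S0 by blast
  next
    case 2
    have "det (matrix (R \<circ> S0)) = 1"
      using R S0(1) 2 by (simp add: matrix_compose orthogonal_transformation_linear det_mul)
    moreover have "(R \<circ> S0) (f v) = f (T v)" for v
      using S0(2) R_fix u(2) by (simp add: span_base)
    ultimately show ?thesis
      using that orthogonal_transformation_compose[OF R(1) S0(1)] by blast
  qed
qed

lemma orbit_O_group_subset_polygon_space: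
  assumes "P \<in> polygon_space n l"
  shows "orbit O_group P \<subseteq> polygon_space n l"
  using assms act_linear_isometry_polygon_space orthogonal_transformation_linear
    orthogonal_transformation_norm
  by (fastforce simp: orbit_def O_group_def)

lemma orbit_SO_group_act_imp_orbit_O_group:
  fixes f :: "real^'d \<Rightarrow> real^'e"
  assumes f: "linear f" "\<And>x. norm (f x) = norm x"
    and "act f Q \<in> orbit SO_group (act f P)"
  shows "Q \<in> orbit O_group P"
proof -
  obtain S where "orthogonal_transformation S" "\<And>i. S (f (P i)) = f (Q i)"
    using assms(3) by (auto simp: orbit_def SO_group_def act_def fun_eq_iff)
  then obtain T where T: "orthogonal_transformation T" "\<And>i. T (P i) = Q i"
    using isometric_embedding_reflects_congruence[OF f] by blast
  then have "Q = act T P"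
    by (auto simp: act_def)
  with T(1) show ?thesis
    by (auto simp: orbit_def O_group_def)
qed

lemma orbit_O_group_imp_orbit_SO_group_act:
  fixes f :: "real^'d \<Rightarrow> real^'e"
  assumes f: "linear f" "\<And>x. norm (f x) = norm x" and dim: "CARD('d) < CARD('e)"
    and "Q \<in> orbit O_group P"
  shows "act f Q \<in> orbit SO_group (act f P)"
proof -
  obtain T where T: "orthogonal_transformation T" "Q = act T P"
    using assms(4) by (auto simp: orbit_def O_group_def)
  obtain S where S: "orthogonal_transformation S" "det (matrix S) = 1" "\<And>v. S (f v) = f (T v)"
    using orthogonal_transformation_lifts_to_rotation[OF f dim T(1)] by blast
  have "act f Q = act S (act f P)"
    by (simp add: T(2) S(3) act_def)
  with S(1,2) show ?thesis
    by (auto simp: orbit_def SO_group_def)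
qed

theorem proposition4p4:
  fixes n :: nat and l :: "nat \<Rightarrow> real"
    and f :: "real^'d \<Rightarrow> real^'e"
    and P :: "nat \<Rightarrow> real^'d"
  assumes "n \<ge> 3"
    and "CARD('d) \<ge> 2"
    and "CARD('e) = CARD('d) + 1"
    and "\<forall>i\<in>{1..n}. l i > 0"
    and "linear f" and "\<forall>x. norm (f x) = norm x"
    and "P \<in> polygon_space n l"
  shows "{Q \<in> polygon_space n l. act f Q \<in> orbit SO_group (act f P)} = orbit O_group P"
proof -
  have f: "linear f" "\<And>x. norm (f x) = norm x"
    using assms(5,6) by auto
  show ?thesis
  proof (intro set_eqI iffI)
    fix Q
    assume "Q \<in> {Q \<in> polygon_space n l. act f Q \<in> orbit SO_group (act f P)}"
    then show "Q \<in> orbit O_group P"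
      using orbit_SO_group_act_imp_orbit_O_group[OF f] by blast
  next
    fix Q
    assume Q: "Q \<in> orbit O_group P"
    then have "Q \<in> polygon_space n l"
      using orbit_O_group_subset_polygon_space[OF assms(7)] by blast
    moreover have "act f Q \<in> orbit SO_group (act f P)"
      using orbit_O_group_imp_orbit_SO_group_act[OF f _ Q] assms(3) by simp
    ultimately show "Q \<in> {Q \<in> polygon_space n l. act f Q \<in> orbit SO_group (act f P)}"
      by blast
  qed
qed

end
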